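(* Let $t$ be a positive integer and let $M$ be a matroid with the $(t,2t)$-property. Then $M$ has no restriction isomorphic to the uniform matroid $U_{t,3t}$.
   Context: A matroid $M$ has the $(t,2t)$-property if every $t$-element subset of $E(M)$ is contained in both a $2t$-element circuit and a $2t$-element cocircuit of $M$. *)

theory Defs
  imports Main
begin

definition matroid :: "'a set \<Rightarrow> ('a set \<Rightarrow> bool) \<Rightarrow> bool" where
  "matroid E indep \<longleftrightarrow>
     finite E \<and> indep {} \<and>
     (\<forall>X. indep X \<longrightarrow> X \<subseteq> E) \<and>
     (\<forall>X Y. indep Y \<and> X \<subseteq> Y \<longrightarrow> indep X) \<and>
     (\<forall>X Y. indep X \<and> indep Y \<and> card X < card Y \<longrightarrow>
        (\<exists>y\<in>Y - X. indep (insert y X)))"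

definition basis :: "'a set \<Rightarrow> ('a set \<Rightarrow> bool) \<Rightarrow> 'a set \<Rightarrow> bool" where
  "basis E indep B \<longleftrightarrow> indep B \<and> (\<forall>X. indep X \<and> B \<subseteq> X \<longrightarrow> X = B)"

definition circuit :: "'a set \<Rightarrow> ('a set \<Rightarrow> bool) \<Rightarrow> 'a set \<Rightarrow> bool" where
  "circuit E indep C \<longleftrightarrow> C \<subseteq> E \<and> \<not> indep C \<and> (\<forall>D. D \<subset> C \<longrightarrow> indep D)"

definition dual_indep :: "'a set \<Rightarrow> ('a set \<Rightarrow> bool) \<Rightarrow> 'a set \<Rightarrow> bool" where
  "dual_indep E indep X \<longleftrightarrow> X \<subseteq> E \<and> (\<exists>B. basis E indep B \<and> X \<inter> B = {})"

definition cocircuit :: "'a set \<Rightarrow> ('a set \<Rightarrow> bool) \<Rightarrow> 'a set \<Rightarrow> bool" where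
  "cocircuit E indep C \<longleftrightarrow> circuit E (dual_indep E indep) C"

definition t2t_property :: "nat \<Rightarrow> 'a set \<Rightarrow> ('a set \<Rightarrow> bool) \<Rightarrow> bool" where
  "t2t_property t E indep \<longleftrightarrow>
     (\<forall>T. T \<subseteq> E \<and> card T = t \<longrightarrow>
        (\<exists>C. circuit E indep C \<and> card C = 2 * t \<and> T \<subseteq> C) \<and>
        (\<exists>D. cocircuit E indep D \<and> card D = 2 * t \<and> T \<subseteq> D))"

definition restrict_indep :: "('a set \<Rightarrow> bool) \<Rightarrow> 'a set \<Rightarrow> 'a set \<Rightarrow> bool" where
  "restrict_indep indep X Y \<longleftrightarrow> indep Y \<and> Y \<subseteq> X"

definition uniform_indep :: "nat \<Rightarrow> nat \<Rightarrow> nat set \<Rightarrow> bool" where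
  "uniform_indep r n Y \<longleftrightarrow> Y \<subseteq> {0..<n} \<and> card Y \<le> r"

definition matroid_iso ::
  "'a set \<Rightarrow> ('a set \<Rightarrow> bool) \<Rightarrow> 'b set \<Rightarrow> ('b set \<Rightarrow> bool) \<Rightarrow> bool" where
  "matroid_iso E1 I1 E2 I2 \<longleftrightarrow>
     (\<exists>f. bij_betw f E1 E2 \<and> (\<forall>Y. Y \<subseteq> E1 \<longrightarrow> (I1 Y \<longleftrightarrow> I2 (f ` Y))))"

end

theory Submission
  imports Defs
begin

text \<open>
  Let \<open>X\<close> carry a restriction isomorphic to \<open>U\<^sub>t\<^sub>,\<^sub>3\<^sub>t\<close>. Pick a \<open>t\<close>-subset \<open>T\<close> of \<open>X\<close> and a
  cocircuit \<open>D \<supseteq> T\<close> with \<open>|D| = 2t\<close>, and fix \<open>x \<in> T\<close>. At least \<open>t\<close> elements of \<open>X\<close> avoid \<open>D\<close>;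
  any \<open>t\<close> of them form an independent set \<open>S\<close> spanning \<open>x\<close>. But an element of a cocircuit
  is never spanned by an independent set disjoint from that cocircuit: extending \<open>S\<close> by
  elements of a basis avoiding \<open>D - {x}\<close> yields a basis disjoint from \<open>D\<close>, so \<open>D\<close> would be
  coindependent.
\<close>

lemma matroid_finite: "matroid E indep \<Longrightarrow> finite E"
  unfolding matroid_def by blast

lemma matroid_indep_subset: "matroid E indep \<Longrightarrow> indep X \<Longrightarrow> X \<subseteq> E"
  unfolding matroid_def by blast

lemma matroid_indep_mono: "matroid E indep \<Longrightarrow> indep Y \<Longrightarrow> X \<subseteq> Y \<Longrightarrow> indep X"
  unfolding matroid_def by blast

lemma matroid_augment:
  "matroid E indep \<Longrightarrow> indep X \<Longrightarrow> indep Y \<Longrightarrow> card X < card Y \<Longrightarrow>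
    \<exists>y\<in>Y - X. indep (insert y X)"
  unfolding matroid_def by blast

lemma basis_if_card_ge:
  assumes m: "matroid E indep" and B: "basis E indep B" and K: "indep K"
    and card_le: "card B \<le> card K"
  shows "basis E indep K"
  unfolding basis_def
proof (intro conjI allI impI)
  show "indep K" by fact
  fix Y assume Y: "indep Y \<and> K \<subseteq> Y"
  show "Y = K"
  proof (rule ccontr)
    assume "Y \<noteq> K"
    then have "K \<subset> Y" using Y by blast
    moreover have "finite Y"
      using Y matroid_indep_subset[OF m] matroid_finite[OF m] by (meson finite_subset)
    ultimately have "card B < card Y"
      using card_le psubset_card_mono by (meson order_le_less_trans)
    then obtain y where "y \<in> Y - B" "indep (insert y B)"
      using matroid_augment[OF m] B Y unfolding basis_def by blast
    then show False using B unfolding basis_def by blast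
  qed
qed

lemma extend_indep_to_basis_avoiding:
  assumes m: "matroid E indep" and S: "indep S" and B: "basis E indep B"
    and spanned: "\<And>c. c \<in> C \<Longrightarrow> \<not> indep (insert c S)"
  shows "\<exists>K. basis E indep K \<and> S \<subseteq> K \<and> K \<subseteq> S \<union> (B - C)"
proof -
  define F where "F = {K. S \<subseteq> K \<and> K \<subseteq> S \<union> (B - C) \<and> indep K}"
  have "indep B" using B unfolding basis_def by blast
  then have "finite (S \<union> B)"
    using S matroid_indep_subset[OF m] matroid_finite[OF m] by (meson finite_Un finite_subset)
  then have "finite F"
    unfolding F_def by (rule rev_finite_subset[OF finite_Pow_iff[THEN iffD2]]) blast
  moreover have "S \<in> F" using S unfolding F_def by blast
  ultimately obtain K where "K \<in> F" and maximal: "\<And>K'. K' \<in> F \<Longrightarrow> K \<subseteq> K' \<Longrightarrow> K' = K"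
    using finite_has_maximal[of F] by blast
  then have K: "S \<subseteq> K" "K \<subseteq> S \<union> (B - C)" "indep K" unfolding F_def by auto
  have "card B \<le> card K"
  proof (rule ccontr)
    assume "\<not> card B \<le> card K"
    then obtain b where b: "b \<in> B - K" "indep (insert b K)"
      using matroid_augment[OF m K(3) \<open>indep B\<close>] by auto
    show False
    proof (cases "b \<in> C")
      case True
      moreover have "insert b S \<subseteq> insert b K" using K(1) by blast
      ultimately show False
        using spanned b(2) matroid_indep_mono[OF m] by blast
    next
      case False
      then have "insert b K \<in> F" using b K unfolding F_def by auto
      then show False using maximal b(1) by blast
    qed
  qed
  then show ?thesis using basis_if_card_ge[OF m B K(3)] K(1,2) by blast
qed

lemma exists_basis_avoiding_cocircuit_minus:
  assumes "cocircuit E indep D" and "x \<in> D"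
  shows "\<exists>B. basis E indep B \<and> (D - {x}) \<inter> B = {}"
proof -
  have "D - {x} \<subset> D" using assms(2) by blast
  then have "dual_indep E indep (D - {x})"
    using assms(1) unfolding cocircuit_def circuit_def by blast
  then show ?thesis unfolding dual_indep_def by blast
qed

lemma indep_insert_cocircuit_elem:
  assumes m: "matroid E indep" and D: "cocircuit E indep D" and x: "x \<in> D"
    and S: "indep S" and disjoint: "S \<inter> D = {}"
  shows "indep (insert x S)"
proof (rule ccontr)
  assume "\<not> indep (insert x S)"
  moreover obtain B where "basis E indep B" and B_D: "(D - {x}) \<inter> B = {}"
    using exists_basis_avoiding_cocircuit_minus[OF D x] by blast
  ultimately obtain K where K: "basis E indep K" "K \<subseteq> S \<union> (B - {x})"
    using extend_indep_to_basis_avoiding[OF m S, of B "{x}"] by blast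
  then have "K \<inter> D = {}" using disjoint B_D by blast
  moreover have "D \<subseteq> E" using D unfolding cocircuit_def circuit_def by simp
  ultimately have "dual_indep E indep D"
    using K(1) unfolding dual_indep_def by blast
  moreover have "\<not> dual_indep E indep D"
    using D unfolding cocircuit_def circuit_def by simp
  ultimately show False by contradiction
qed

lemma uniform_restrictionD:
  assumes "matroid_iso X (restrict_indep indep X) {0..<n} (uniform_indep r n)"
  shows "card X = n" and "\<And>Y. Y \<subseteq> X \<Longrightarrow> indep Y \<longleftrightarrow> card Y \<le> r"
proof -
  obtain f where bij: "bij_betw f X {0..<n}"
    and iso: "\<And>Y. Y \<subseteq> X \<Longrightarrow> restrict_indep indep X Y \<longleftrightarrow> uniform_indep r n (f ` Y)"
    using assms unfolding matroid_iso_def by blast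
  show "card X = n" using bij_betw_same_card[OF bij] by simp
  fix Y assume Y: "Y \<subseteq> X"
  have "card (f ` Y) = card Y"
    using bij_betw_imp_inj_on[OF bij] Y by (meson card_image inj_on_subset)
  moreover have "f ` Y \<subseteq> {0..<n}" using Y bij_betw_imp_surj_on[OF bij] by blast
  ultimately show "indep Y \<longleftrightarrow> card Y \<le> r"
    using iso[OF Y] Y unfolding restrict_indep_def uniform_indep_def by auto
qed

theorem lemma5p2:
  fixes E :: "'a set" and indep :: "'a set \<Rightarrow> bool" and t :: nat
  assumes "0 < t"
    and "matroid E indep"
    and "t2t_property t E indep"
  shows "\<not> (\<exists>X. X \<subseteq> E \<and>
            matroid_iso X (restrict_indep indep X) {0..<3*t} (uniform_indep t (3*t)))"
proof
  assume "\<exists>X. X \<subseteq> E \<and>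
            matroid_iso X (restrict_indep indep X) {0..<3*t} (uniform_indep t (3*t))"
  then obtain X where "X \<subseteq> E"
    and U: "matroid_iso X (restrict_indep indep X) {0..<3*t} (uniform_indep t (3*t))"
    by blast
  note card_X = uniform_restrictionD(1)[OF U]
    and indep_X = uniform_restrictionD(2)[OF U]
  obtain T where T: "T \<subseteq> X" "card T = t"
    using obtain_subset_with_card_n[of t X] card_X by auto
  moreover have "T \<subseteq> E" using T(1) \<open>X \<subseteq> E\<close> by blast
  ultimately obtain D where D: "cocircuit E indep D" "card D = 2*t" "T \<subseteq> D"
    using assms(3) unfolding t2t_property_def by auto
  obtain x where x: "x \<in> T" using T assms(1) by fastforce
  have "finite X" using card_X assms(1) by (simp add: card_ge_0_finite)
  have "finite D" using D(2) assms(1) by (simp add: card_ge_0_finite)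
  then have "card (X \<inter> D) \<le> 2*t" using D(2) by (metis card_mono inf_le2)
  then have "t \<le> card (X - D)"
    using card_X \<open>finite X\<close> card_Diff_subset_Int[of X D] by simp
  then obtain S where S: "S \<subseteq> X - D" "card S = t" "finite S"
    by (rule obtain_subset_with_card_n)
  have "x \<notin> S" using S(1) x D(3) by blast
  have "indep S" using indep_X S(1,2) by blast
  then have "indep (insert x S)"
    using indep_insert_cocircuit_elem[OF assms(2) D(1)] x D(3) S(1) by blast
  moreover have "insert x S \<subseteq> X" using S(1) T(1) x by blast
  moreover have "card (insert x S) = t + 1" using \<open>x \<notin> S\<close> S(2,3) by simp
  ultimately show False using indep_X by simp
qed

end
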